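(* Let $R$ be a Bézout domain and let $A,B,C\in R^{n\times n}$ satisfy $ABA=ACA$. If $AB$ and $CA$ are group invertible, then $AB$ is similar to $CA$.
   Context: A Bézout domain is an integral domain in which every finitely generated ideal is principal. $R^{n\times n}$ is the ring of $n\times n$ matrices over $R$. A matrix $M\in R^{n\times n}$ is group invertible if there exists $X\in R^{n\times n}$ with $MX=XM$, $XMX=X$, $MXM=M$; such $X$ is unique and denoted $M^{\#}$. Two matrices $M,N\in R^{n\times n}$ are similar if $M=S^{-1}NS$ for some invertible $S\in R^{n\times n}$. *)

theory Defs
  imports "Jordan_Normal_Form.Matrix"
begin

definition gen_ideal :: "'a::comm_ring_1 set \<Rightarrow> 'a set" where
  "gen_ideal S = {\<Sum>s\<in>S. c s * s | c. True}"

definition bezout_domain :: "'a::idom itself \<Rightarrow> bool" where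
  "bezout_domain _ \<longleftrightarrow>
     (\<forall>S::'a set. finite S \<longrightarrow> (\<exists>d. gen_ideal S = {r * d | r. True}))"

definition group_invertible :: "nat \<Rightarrow> 'a::comm_ring_1 mat \<Rightarrow> bool" where
  "group_invertible n M \<longleftrightarrow>
     (\<exists>X \<in> carrier_mat n n. M * X = X * M \<and> X * M * X = X \<and> M * X * M = M)"

end

theory Submission
  imports Defs "Jordan_Normal_Form.Determinant"
begin

text \<open>Put M = A B, N = C A and Y = C A B. From A B A = A C A one gets M A = A N, N Y = Y M,
  A Y = M^2 and Y A = N^2, and these relations pass to the group inverses M#, N#. Hence
  U = A N# N and V = Y M# M# satisfy U V = M# M and V U = N# N: the idempotents E = M# M and
  F = N# N are Murray-von Neumann equivalent, and M U = U N. So M and N are conjugate via U on the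
  images of E and F, while both vanish on the images of 1 - E and 1 - F.
  Over a Bezout domain every idempotent matrix G splits as G = X Z with Z X = I_r (peel off
  unimodular vectors of its image one at a time); r is invariant under equivalence and
  rank G + rank (1 - G) = n. So 1 - E and 1 - F have equal rank and are equivalent via some
  W, W', and then U + W is invertible with inverse V + W' and conjugates N into M.\<close>

text \<open>The carrier premises of assoc_mult_mat mention dimensions that simp cannot guess; stated
  with dimensions instead, simp uses it to reassociate every product to the right.\<close>

lemma assoc_mult_mat_dim[simp]:
  fixes A :: "'a::semiring_0 mat"
  assumes "dim_col A = dim_row B" "dim_col B = dim_row C"
  shows "A * B * C = A * (B * C)"
  using assms by (intro assoc_mult_mat) auto

text \<open>Only for instantiated use: as a simp rule with the equation as premise it loops against
  assoc_mult_mat_dim.\<close>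

lemma mult_mat_assoc_eq:
  fixes A :: "'a::semiring_0 mat"
  assumes "A * B = C" "dim_col A = dim_row B" "dim_col B = dim_row T"
  shows "A * (B * T) = C * T"
  using assms by (simp flip: assoc_mult_mat_dim)

lemma mult_mat_zero_through:
  fixes A B P Q :: "'a::semiring_0 mat"
  assumes "A \<in> carrier_mat a n" "P \<in> carrier_mat n n" "Q \<in> carrier_mat n n" "B \<in> carrier_mat n b"
    and "A * P = A" "P * Q = 0\<^sub>m n n" "Q * B = B"
  shows "A * B = 0\<^sub>m a b"
proof -
  have "A * B = A * P * (Q * B)" using assms(5,7) by simp
  also have "\<dots> = A * (P * Q) * B" using assms(1-4) by simp
  finally show ?thesis using assms by simp
qed

lemma mult_mat_eq_one_imp_le:
  fixes Z X :: "'a::comm_ring_1 mat"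
  assumes Z: "Z \<in> carrier_mat k n" and X: "X \<in> carrier_mat n k" and ZX: "Z * X = 1\<^sub>m k"
  shows "k \<le> n"
proof (rule ccontr)
  assume "\<not> k \<le> n"
  then have nk: "n < k" by simp
  define X0 where "X0 = mat k k (\<lambda>(i,j). if i < n then X $$ (i,j) else 0)"
  define Z0 where "Z0 = mat k k (\<lambda>(i,j). if j < n then Z $$ (i,j) else 0)"
  have X0: "X0 \<in> carrier_mat k k" and Z0: "Z0 \<in> carrier_mat k k" by (auto simp: X0_def Z0_def)
  have "Z0 * X0 = Z * X"
  proof (rule eq_matI)
    fix i j assume "i < dim_row (Z * X)" "j < dim_col (Z * X)"
    then have i: "i < k" and j: "j < k" using Z X by auto
    have "(Z0 * X0) $$ (i,j) = (\<Sum>l\<in>{0..<k}. Z0 $$ (i,l) * X0 $$ (l,j))"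
      using X0 Z0 i j by (simp add: scalar_prod_def)
    also have "\<dots> = (\<Sum>l\<in>{0..<n}. Z0 $$ (i,l) * X0 $$ (l,j))"
      by (rule sum.mono_neutral_right) (use nk i j in \<open>auto simp: X0_def\<close>)
    also have "\<dots> = (Z * X) $$ (i,j)"
      using Z X nk i j by (simp add: scalar_prod_def X0_def Z0_def)
    finally show "(Z0 * X0) $$ (i,j) = (Z * X) $$ (i,j)" .
  qed (use Z X in \<open>auto simp: X0_def Z0_def\<close>)
  moreover have "det X0 = 0"
  proof -
    \<comment> \<open>row n of X0 is zero, so scaling it by 0 does not change X0\<close>
    have "multrow n 0 X0 = X0" by (rule eq_matI) (auto simp: X0_def)
    then show ?thesis using det_multrow[OF nk X0, of 0] by simp
  qed
  ultimately have "det (Z * X) = 0" using det_mult[OF Z0 X0] by simp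
  with ZX show False by simp
qed

definition append_cols :: "'a::zero mat \<Rightarrow> 'a mat \<Rightarrow> 'a mat" (infixr \<open>@\<^sub>c\<close> 65) where
  "X @\<^sub>c Y = four_block_mat X Y (0\<^sub>m 0 (dim_col X)) (0\<^sub>m 0 (dim_col Y))"

lemma carrier_append_cols[simp,intro]:
  "X \<in> carrier_mat n a \<Longrightarrow> Y \<in> carrier_mat n b \<Longrightarrow> X @\<^sub>c Y \<in> carrier_mat n (a + b)"
  unfolding append_cols_def by auto

lemma append_cols_mult_append_rows:
  fixes X Y Z W :: "'a::comm_ring_1 mat"
  assumes "X \<in> carrier_mat n a" "Y \<in> carrier_mat n b" "Z \<in> carrier_mat a m" "W \<in> carrier_mat b m"
  shows "(X @\<^sub>c Y) * (Z @\<^sub>r W) = X * Z + Y * W"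
  unfolding append_cols_def append_rows_def carrier_matD[OF assms(1)] carrier_matD[OF assms(2)]
    carrier_matD[OF assms(3)] carrier_matD[OF assms(4)]
  by (subst mult_four_block_mat[OF assms(1,2) zero_carrier_mat zero_carrier_mat assms(3)
        zero_carrier_mat assms(4) zero_carrier_mat]) (use assms in \<open>intro eq_matI; auto\<close>)

lemma append_rows_mult_append_cols:
  fixes X Y Z W :: "'a::comm_ring_1 mat"
  assumes "Z \<in> carrier_mat a n" "W \<in> carrier_mat b n" "X \<in> carrier_mat n c" "Y \<in> carrier_mat n d"
  shows "(Z @\<^sub>r W) * (X @\<^sub>c Y) = four_block_mat (Z * X) (Z * Y) (W * X) (W * Y)"
  unfolding append_cols_def append_rows_def carrier_matD[OF assms(1)] carrier_matD[OF assms(2)]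
    carrier_matD[OF assms(3)] carrier_matD[OF assms(4)]
  by (subst mult_four_block_mat[OF assms(1) zero_carrier_mat assms(2) zero_carrier_mat assms(3,4)
        zero_carrier_mat zero_carrier_mat]) (use assms in auto)

lemma idempotent_mat_diff:
  fixes E F :: "'a::comm_ring_1 mat"
  assumes E: "E \<in> carrier_mat n n" and F: "F \<in> carrier_mat n n"
    and EE: "E * E = E" and FF: "F * F = F" and EF: "E * F = F" and FE: "F * E = F"
  shows "(E - F) * (E - F) = E - F" "E * (E - F) = E - F" "(E - F) * E = E - F"
    "F * (E - F) = 0\<^sub>m n n" "(E - F) * F = 0\<^sub>m n n"
proof -
  have EFC: "E - F \<in> carrier_mat n n" using F by (rule minus_carrier_mat)
  show EmF: "E * (E - F) = E - F" using mult_minus_distrib_mat[OF E E F] EE EF by simp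
  show "(E - F) * E = E - F" using minus_mult_distrib_mat[OF E F E] EE FE by simp
  show FmF: "F * (E - F) = 0\<^sub>m n n"
    using mult_minus_distrib_mat[OF F E F] FE FF F by simp
  show "(E - F) * F = 0\<^sub>m n n"
    using minus_mult_distrib_mat[OF E F F] EF FF F by simp
  show "(E - F) * (E - F) = E - F"
    using minus_mult_distrib_mat[OF E F EFC] EmF FmF E F by (intro eq_matI) auto
qed

lemma idempotent_mat_compl:
  fixes G :: "'a::comm_ring_1 mat"
  assumes "G \<in> carrier_mat n n" and "G * G = G"
  shows "(1\<^sub>m n - G) * (1\<^sub>m n - G) = 1\<^sub>m n - G" "G * (1\<^sub>m n - G) = 0\<^sub>m n n"
    "(1\<^sub>m n - G) * G = 0\<^sub>m n n"
  using idempotent_mat_diff[OF one_carrier_mat assms(1) _ assms(2)] assms(1) by auto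

lemma gen_ideal_pair: "gen_ideal {a, b} = {\<alpha> * a + \<beta> * b | \<alpha> \<beta>. True}"
proof (intro equalityI subsetI)
  fix g assume "g \<in> gen_ideal {a, b}"
  then obtain c where "g = (\<Sum>s\<in>{a, b}. c s * s)" by (auto simp: gen_ideal_def)
  then have "g = c a * a + (if a = b then 0 else c b) * b" by (cases "a = b") auto
  then show "g \<in> {\<alpha> * a + \<beta> * b | \<alpha> \<beta>. True}" by blast
next
  fix g assume "g \<in> {\<alpha> * a + \<beta> * b | \<alpha> \<beta>. True}"
  then obtain \<alpha> \<beta> where g: "g = \<alpha> * a + \<beta> * b" by blast
  show "g \<in> gen_ideal {a, b}"
  proof (cases "a = b")
    case True
    then show ?thesis unfolding gen_ideal_def g
      by (intro CollectI exI[of _ "\<lambda>_. \<alpha> + \<beta>"]) (simp add: algebra_simps)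
  next
    case False
    then show ?thesis unfolding gen_ideal_def g
      by (intro CollectI exI[of _ "\<lambda>s. if s = a then \<alpha> else \<beta>"]) simp
  qed
qed

lemma bezout_domain_pair:
  fixes a b :: "'a::idom"
  assumes "bezout_domain TYPE('a)"
  shows "\<exists>\<alpha> \<beta>. (\<alpha> * a + \<beta> * b) dvd a \<and> (\<alpha> * a + \<beta> * b) dvd b"
proof -
  have "\<exists>d. gen_ideal {a, b} = {r * d | r. True}"
    using assms unfolding bezout_domain_def by simp
  then obtain d where d: "{\<alpha> * a + \<beta> * b | \<alpha> \<beta>. True} = {r * d | r. True}"
    unfolding gen_ideal_pair by blast
  have "d = 1 * d" by simp
  then obtain \<alpha> \<beta> where "d = \<alpha> * a + \<beta> * b" using d by blast
  moreover have "d dvd x" if "x \<in> {\<alpha> * a + \<beta> * b | \<alpha> \<beta>. True}" for x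
    using that unfolding d by auto
  moreover have "a = 1 * a + 0 * b" "b = 0 * a + 1 * b" by simp_all
  ultimately show ?thesis by blast
qed

lemma bezout_domain_sum_dvd:
  fixes f :: "'b \<Rightarrow> 'a::idom"
  assumes "bezout_domain TYPE('a)" and "finite I"
  shows "\<exists>c. \<forall>i\<in>I. (\<Sum>j\<in>I. c j * f j) dvd f i"
  using assms(2)
proof (induction I rule: finite_induct)
  case empty
  show ?case by simp
next
  case (insert x I)
  then obtain c where c: "\<forall>i\<in>I. (\<Sum>j\<in>I. c j * f j) dvd f i" by blast
  define d where "d = (\<Sum>j\<in>I. c j * f j)"
  obtain \<alpha> \<beta> where ab: "(\<alpha> * d + \<beta> * f x) dvd d" "(\<alpha> * d + \<beta> * f x) dvd f x"
    using bezout_domain_pair[OF assms(1)] by blast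
  define c' where "c' = (\<lambda>j. if j = x then \<beta> else \<alpha> * c j)"
  have "(\<Sum>j\<in>insert x I. c' j * f j) = \<beta> * f x + (\<Sum>j\<in>I. \<alpha> * (c j * f j))"
    using insert.hyps by (auto simp: c'_def mult.assoc intro!: sum.cong)
  also have "\<dots> = \<alpha> * d + \<beta> * f x" by (simp add: d_def sum_distrib_left)
  finally have sum: "(\<Sum>j\<in>insert x I. c' j * f j) = \<alpha> * d + \<beta> * f x" .
  have "\<forall>i\<in>insert x I. (\<alpha> * d + \<beta> * f x) dvd f i"
    using ab c unfolding d_def[symmetric] by (auto intro: dvd_trans)
  then show ?case unfolding sum[symmetric] by blast
qed

lemma bezout_idempotent_fixes_unimodular:
  fixes H :: "'a::idom mat"
  assumes bez: "bezout_domain TYPE('a)" and H: "H \<in> carrier_mat n n" and HH: "H * H = H"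
    and nz: "H \<noteq> 0\<^sub>m n n"
  shows "\<exists>u c. u \<in> carrier_mat n 1 \<and> c \<in> carrier_mat 1 n \<and> H * u = u \<and> c * u = 1\<^sub>m 1"
proof -
  \<comment> \<open>a nonzero column h of H is d q with c q = 1, where d = c h divides all entries of h;
    H h = h as H is idempotent, and cancelling d gives H q = q\<close>
  obtain i0 j0 where i0: "i0 < n" and j0: "j0 < n" and Hij: "H $$ (i0, j0) \<noteq> 0"
    using nz H by (metis carrier_matD eq_matI index_zero_mat)
  define h where "h i = H $$ (i, j0)" for i
  obtain c where dvd: "\<forall>i\<in>{0..<n}. (\<Sum>j\<in>{0..<n}. c j * h j) dvd h i"
    using bezout_domain_sum_dvd[OF bez] by blast
  define d where "d = (\<Sum>j\<in>{0..<n}. c j * h j)"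
  have "\<forall>i\<in>{0..<n}. \<exists>q. h i = d * q" using dvd unfolding d_def dvd_def by blast
  then obtain q where hq: "\<And>i. i < n \<Longrightarrow> h i = d * q i" by (metis atLeastLessThan_iff bchoice zero_le)
  have "d \<noteq> 0" using hq[OF i0] Hij by (auto simp: h_def)
  have cq: "(\<Sum>j\<in>{0..<n}. c j * q j) = 1"
  proof -
    have "d * (\<Sum>j\<in>{0..<n}. c j * q j) = (\<Sum>j\<in>{0..<n}. c j * h j)"
      by (simp add: hq sum_distrib_left algebra_simps)
    also have "\<dots> = d * 1" by (simp add: d_def)
    finally show ?thesis using \<open>d \<noteq> 0\<close> by simp
  qed
  have Hq: "(\<Sum>k\<in>{0..<n}. H $$ (i, k) * q k) = q i" if i: "i < n" for i
  proof -
    have "d * (\<Sum>k\<in>{0..<n}. H $$ (i, k) * q k) = (\<Sum>k\<in>{0..<n}. H $$ (i, k) * h k)"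
      using hq by (simp add: sum_distrib_left algebra_simps)
    also have "\<dots> = (H * H) $$ (i, j0)" using H i j0 by (simp add: scalar_prod_def h_def)
    also have "\<dots> = d * q i" using HH hq[OF i] by (simp add: h_def)
    finally show ?thesis using \<open>d \<noteq> 0\<close> by simp
  qed
  define u where "u = mat n 1 (\<lambda>(i, _). q i)"
  define c' where "c' = mat 1 n (\<lambda>(_, j). c j)"
  have "H * u = u" by (rule eq_matI) (use H Hq in \<open>auto simp: u_def scalar_prod_def\<close>)
  moreover have "c' * u = 1\<^sub>m 1" by (rule eq_matI) (use cq in \<open>auto simp: u_def c'_def scalar_prod_def\<close>)
  moreover have "u \<in> carrier_mat n 1" "c' \<in> carrier_mat 1 n" by (auto simp: u_def c'_def)
  ultimately show ?thesis by blast
qed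

text \<open>A partial split exhibits a free direct summand of rank r, the image of the idempotent X Z,
  inside the image of G; a split is a partial split that exhausts G.\<close>

definition partial_split_wit :: "nat \<Rightarrow> nat \<Rightarrow> 'a::semiring_1 mat \<Rightarrow> 'a mat \<Rightarrow> 'a mat \<Rightarrow> bool" where
  "partial_split_wit n r G X Z \<longleftrightarrow> X \<in> carrier_mat n r \<and> Z \<in> carrier_mat r n \<and> Z * X = 1\<^sub>m r
     \<and> G * X = X \<and> Z * G = Z"

definition split_wit :: "nat \<Rightarrow> nat \<Rightarrow> 'a::semiring_1 mat \<Rightarrow> 'a mat \<Rightarrow> 'a mat \<Rightarrow> bool" where
  "split_wit n r G X Z \<longleftrightarrow> X \<in> carrier_mat n r \<and> Z \<in> carrier_mat r n \<and> Z * X = 1\<^sub>m r \<and> X * Z = G"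

lemma split_wit_imp_partial_split_wit:
  assumes "split_wit n r G X Z"
  shows "partial_split_wit n r G X Z"
proof -
  have X: "X \<in> carrier_mat n r" and Z: "Z \<in> carrier_mat r n" and ZX: "Z * X = 1\<^sub>m r"
    and XZ: "X * Z = G" using assms unfolding split_wit_def by auto
  have "G * X = X" "Z * G = Z"
    unfolding XZ[symmetric] using X Z ZX mult_mat_assoc_eq[OF ZX] by simp_all
  with X Z ZX show ?thesis unfolding partial_split_wit_def by blast
qed

lemma partial_split_wit_append:
  fixes G :: "'a::comm_ring_1 mat"
  assumes G: "G \<in> carrier_mat n n"
    and s1: "partial_split_wit n k G X Z" and s2: "partial_split_wit n l G X' Z'"
    and ZX': "Z * X' = 0\<^sub>m k l" and Z'X: "Z' * X = 0\<^sub>m l k"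
  shows "partial_split_wit n (k + l) G (X @\<^sub>c X') (Z @\<^sub>r Z')"
proof -
  have X: "X \<in> carrier_mat n k" and Z: "Z \<in> carrier_mat k n"
    and X': "X' \<in> carrier_mat n l" and Z': "Z' \<in> carrier_mat l n"
    using s1 s2 unfolding partial_split_wit_def by auto
  let ?X = "X @\<^sub>c X'" and ?Z = "Z @\<^sub>r Z'"
  have XC: "?X \<in> carrier_mat n (k + l)" and ZC: "?Z \<in> carrier_mat (k + l) n" using X X' Z Z' by auto
  have ZX: "?Z * ?X = 1\<^sub>m (k + l)"
    using s1 s2 ZX' Z'X unfolding append_rows_mult_append_cols[OF Z Z' X X'] partial_split_wit_def
    by simp
  have XZ: "?X * ?Z = X * Z + X' * Z'" by (rule append_cols_mult_append_rows[OF X X' Z Z'])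
  have GXZ: "G * (?X * ?Z) = ?X * ?Z" "?X * ?Z * G = ?X * ?Z"
    using s1 s2 G X X' Z Z' unfolding XZ partial_split_wit_def
    by (simp_all add: mult_add_distrib_mat[of G n n _ n] add_mult_distrib_mat[of _ n n _ _ n]
        mult_mat_assoc_eq[of G X X] mult_mat_assoc_eq[of G X' X'])
  have "G * ?X = G * (?X * ?Z) * ?X" "?Z * G = ?Z * (?X * ?Z * G)"
    using ZX G XC ZC mult_mat_assoc_eq[OF ZX] by simp_all
  then have "G * ?X = ?X" "?Z * G = ?Z"
    unfolding GXZ using ZX XC ZC mult_mat_assoc_eq[OF ZX] by simp_all
  with XC ZC ZX show ?thesis unfolding partial_split_wit_def by blast
qed

lemma bezout_partial_split_wit_step:
  fixes G :: "'a::idom mat"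
  assumes bez: "bezout_domain TYPE('a)" and G: "G \<in> carrier_mat n n" and GG: "G * G = G"
    and split: "partial_split_wit n k G X Z" and incomplete: "X * Z \<noteq> G"
  shows "\<exists>u w. partial_split_wit n (k + 1) G (X @\<^sub>c u) (Z @\<^sub>r w)"
proof -
  have X: "X \<in> carrier_mat n k" and Z: "Z \<in> carrier_mat k n" and ZX: "Z * X = 1\<^sub>m k"
    and GX: "G * X = X" and ZG: "Z * G = Z"
    using split unfolding partial_split_wit_def by auto
  have XZ: "X * Z \<in> carrier_mat n n" using X Z by simp
  have XZ_props: "X * Z * (X * Z) = X * Z" "G * (X * Z) = X * Z" "X * Z * G = X * Z"
    "Z * (X * Z) = Z" "X * Z * X = X"
    using X Z G ZX GX ZG mult_mat_assoc_eq[OF ZX] mult_mat_assoc_eq[OF GX] by simp_all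
  define H where "H = G - X * Z"
  have H: "H \<in> carrier_mat n n" unfolding H_def using XZ by (rule minus_carrier_mat)
  note H_props = idempotent_mat_diff[OF G XZ GG XZ_props(1-3), folded H_def]
  have "H \<noteq> 0\<^sub>m n n"
  proof
    assume H0: "H = 0\<^sub>m n n"
    have "X * Z = G"
    proof (rule eq_matI)
      fix i j assume ij: "i < dim_row G" "j < dim_col G"
      then have "(G - X * Z) $$ (i, j) = 0" using H0 G by (simp add: H_def)
      then show "(X * Z) $$ (i, j) = G $$ (i, j)" using ij G X Z by simp
    qed (use G XZ in auto)
    with incomplete show False ..
  qed
  then obtain u c where u: "u \<in> carrier_mat n 1" and c: "c \<in> carrier_mat 1 n"
    and Hu: "H * u = u" and cu: "c * u = 1\<^sub>m 1"
    using bezout_idempotent_fixes_unimodular[OF bez H H_props(1)] by blast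
  define w where "w = c * H"
  have w: "w \<in> carrier_mat 1 n" using c H by (simp add: w_def)
  have wH: "w * H = w" using c H H_props(1) by (simp add: w_def)
  have "G * u = G * H * u" using G H u Hu by simp
  also have "\<dots> = u" using H_props(2) Hu by simp
  finally have "G * u = u" .
  moreover have "w * u = 1\<^sub>m 1" using c H u Hu cu by (simp add: w_def)
  moreover have "w * G = w" using c H G H_props(3) by (simp add: w_def)
  ultimately have "partial_split_wit n 1 G u w" using u w unfolding partial_split_wit_def by blast
  moreover have "Z * u = 0\<^sub>m k 1"
    by (rule mult_mat_zero_through[OF Z XZ H u XZ_props(4) H_props(4) Hu])
  moreover have "w * X = 0\<^sub>m 1 k"
    by (rule mult_mat_zero_through[OF w H XZ X wH H_props(5) XZ_props(5)])
  ultimately show ?thesis using partial_split_wit_append[OF G split] by blast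
qed

lemma bezout_partial_split_wit_extends:
  fixes G :: "'a::idom mat"
  assumes bez: "bezout_domain TYPE('a)" and G: "G \<in> carrier_mat n n" and GG: "G * G = G"
  shows "partial_split_wit n k G X Z \<Longrightarrow> \<exists>r X' Z'. split_wit n r G X' Z'"
proof (induction "n - k" arbitrary: k X Z rule: less_induct)
  case less
  show ?case
  proof (cases "X * Z = G")
    case True
    then show ?thesis using less.prems unfolding partial_split_wit_def split_wit_def by blast
  next
    case False
    obtain u w where ext: "partial_split_wit n (k + 1) G (X @\<^sub>c u) (Z @\<^sub>r w)"
      using bezout_partial_split_wit_step[OF bez G GG less.prems False] by blast
    then have "k + 1 \<le> n" unfolding partial_split_wit_def using mult_mat_eq_one_imp_le by blast
    then show ?thesis by (intro less.hyps[OF _ ext]) linarith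
  qed
qed

lemma bezout_idempotent_split:
  fixes G :: "'a::idom mat"
  assumes "bezout_domain TYPE('a)" and "G \<in> carrier_mat n n" and "G * G = G"
  shows "\<exists>r X Z. split_wit n r G X Z"
  using assms by (intro bezout_partial_split_wit_extends[of G n 0 "0\<^sub>m n 0" "0\<^sub>m 0 n"])
    (auto simp: partial_split_wit_def)

text \<open>Murray-von Neumann equivalence of the idempotents E and F: U and V restrict to mutually
  inverse maps between their images.\<close>

definition idem_equiv_wit :: "nat \<Rightarrow> 'a::semiring_1 mat \<Rightarrow> 'a mat \<Rightarrow> 'a mat \<Rightarrow> 'a mat \<Rightarrow> bool" where
  "idem_equiv_wit n E F U V \<longleftrightarrow> {E, F, U, V} \<subseteq> carrier_mat n n
     \<and> U * V = E \<and> V * U = F \<and> U * F = U \<and> V * E = V"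

lemma idem_equiv_wit_sym: "idem_equiv_wit n E F U V \<Longrightarrow> idem_equiv_wit n F E V U"
  unfolding idem_equiv_wit_def by auto

lemma idem_equiv_witD:
  assumes "idem_equiv_wit n E F U V"
  shows "E * E = E" "E * U = U"
proof -
  have U: "U \<in> carrier_mat n n" and V: "V \<in> carrier_mat n n"
    and UV: "U * V = E" and VU: "V * U = F" and UF: "U * F = U"
    using assms unfolding idem_equiv_wit_def by auto
  have "E * E = U * (V * U) * V" using U V by (simp flip: UV)
  also have "\<dots> = E" using UF UV by (simp add: VU)
  finally show "E * E = E" .
  have "E * U = U * (V * U)" using U V by (simp flip: UV)
  also have "\<dots> = U" using UF by (simp add: VU)
  finally show "E * U = U" .
qed

lemma split_wit_rank_le:
  fixes E :: "'a::comm_ring_1 mat"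
  assumes equiv: "idem_equiv_wit n E F U V"
    and sE: "split_wit n r E X Z" and sF: "split_wit n s F X' Z'"
  shows "r \<le> s"
proof -
  have U: "U \<in> carrier_mat n n" and V: "V \<in> carrier_mat n n" and F: "F \<in> carrier_mat n n"
    and UV: "U * V = E" and UF: "U * F = U"
    using equiv unfolding idem_equiv_wit_def by auto
  have X: "X \<in> carrier_mat n r" and Z: "Z \<in> carrier_mat r n" and ZX: "Z * X = 1\<^sub>m r"
    and EX: "E * X = X" using split_wit_imp_partial_split_wit[OF sE] unfolding partial_split_wit_def by auto
  have X': "X' \<in> carrier_mat n s" and Z': "Z' \<in> carrier_mat s n" and XZ': "X' * Z' = F"
    using sF unfolding split_wit_def by auto
  have "(Z * U * X') * (Z' * V * X) = 1\<^sub>m r"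
    using U V F X Z X' Z' ZX EX mult_mat_assoc_eq[OF XZ'] mult_mat_assoc_eq[OF UF]
      mult_mat_assoc_eq[OF UV] by simp
  then show "r \<le> s" by (rule mult_mat_eq_one_imp_le[rotated 2]) (use U V X Z X' Z' in auto)
qed

lemma split_wit_rank_eq:
  fixes E :: "'a::comm_ring_1 mat"
  assumes "idem_equiv_wit n E F U V" and "split_wit n r E X Z" and "split_wit n s F X' Z'"
  shows "r = s"
  using split_wit_rank_le[OF assms] split_wit_rank_le[OF idem_equiv_wit_sym assms(3,2), OF assms(1)]
  by simp

lemma split_wit_compl_rank:
  fixes G :: "'a::comm_ring_1 mat"
  assumes G: "G \<in> carrier_mat n n"
    and sG: "split_wit n r G X Z" and sG': "split_wit n t (1\<^sub>m n - G) X' Z'"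
  shows "r + t = n"
proof -
  have X: "X \<in> carrier_mat n r" and Z: "Z \<in> carrier_mat r n" and ZX: "Z * X = 1\<^sub>m r"
    and XZ: "X * Z = G" and GX: "G * X = X" and ZG: "Z * G = Z"
    using sG split_wit_imp_partial_split_wit[OF sG]
    unfolding split_wit_def partial_split_wit_def by auto
  have X': "X' \<in> carrier_mat n t" and Z': "Z' \<in> carrier_mat t n" and Z'X': "Z' * X' = 1\<^sub>m t"
    and X'Z': "X' * Z' = 1\<^sub>m n - G" and GX': "(1\<^sub>m n - G) * X' = X'" and Z'G: "Z' * (1\<^sub>m n - G) = Z'"
    using sG' split_wit_imp_partial_split_wit[OF sG']
    unfolding split_wit_def partial_split_wit_def by auto
  have GG: "G * G = G" using X Z ZX by (simp flip: XZ add: mult_mat_assoc_eq[OF ZX])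
  have G': "1\<^sub>m n - G \<in> carrier_mat n n" using G by (rule minus_carrier_mat)
  note compl = idempotent_mat_compl[OF G GG]
  have "Z * X' = 0\<^sub>m r t" by (rule mult_mat_zero_through[OF Z G G' X' ZG compl(2) GX'])
  moreover have "Z' * X = 0\<^sub>m t r" by (rule mult_mat_zero_through[OF Z' G' G X Z'G compl(3) GX])
  moreover have "partial_split_wit n r (1\<^sub>m n) X Z" "partial_split_wit n t (1\<^sub>m n) X' Z'"
    using X Z ZX X' Z' Z'X' unfolding partial_split_wit_def by auto
  ultimately have "partial_split_wit n (r + t) (1\<^sub>m n) (X @\<^sub>c X') (Z @\<^sub>r Z')"
    by (intro partial_split_wit_append) auto
  then have "r + t \<le> n" unfolding partial_split_wit_def using mult_mat_eq_one_imp_le by blast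
  moreover have "(X @\<^sub>c X') * (Z @\<^sub>r Z') = 1\<^sub>m n"
    unfolding append_cols_mult_append_rows[OF X X' Z Z'] XZ X'Z' using G by (intro eq_matI) auto
  then have "n \<le> r + t" by (rule mult_mat_eq_one_imp_le[rotated 2]) (use X X' Z Z' in auto)
  ultimately show ?thesis by simp
qed

lemma split_wit_idem_equiv:
  assumes "split_wit n r E X Z" and "split_wit n r F X' Z'"
  shows "idem_equiv_wit n E F (X * Z') (X' * Z)"
proof -
  have X: "X \<in> carrier_mat n r" and Z: "Z \<in> carrier_mat r n" and ZX: "Z * X = 1\<^sub>m r"
    and XZ: "X * Z = E" and X': "X' \<in> carrier_mat n r" and Z': "Z' \<in> carrier_mat r n"
    and Z'X': "Z' * X' = 1\<^sub>m r" and X'Z': "X' * Z' = F"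
    using assms unfolding split_wit_def by auto
  show ?thesis
    unfolding idem_equiv_wit_def using X Z X' Z' mult_mat_assoc_eq[OF ZX] mult_mat_assoc_eq[OF Z'X']
    by (auto simp flip: XZ X'Z')
qed

lemma bezout_idem_equiv_compl:
  fixes E F :: "'a::idom mat"
  assumes bez: "bezout_domain TYPE('a)" and equiv: "idem_equiv_wit n E F U V"
  shows "\<exists>W W'. idem_equiv_wit n (1\<^sub>m n - E) (1\<^sub>m n - F) W W'"
proof -
  have E: "E \<in> carrier_mat n n" and F: "F \<in> carrier_mat n n"
    using equiv unfolding idem_equiv_wit_def by auto
  have EE: "E * E = E" and FF: "F * F = F"
    using idem_equiv_witD(1)[OF equiv] idem_equiv_witD(1)[OF idem_equiv_wit_sym[OF equiv]] by auto
  have E': "1\<^sub>m n - E \<in> carrier_mat n n" and F': "1\<^sub>m n - F \<in> carrier_mat n n"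
    using E F by (auto intro: minus_carrier_mat)
  obtain r X Z where sE: "split_wit n r E X Z" using bezout_idempotent_split[OF bez E EE] by blast
  obtain s X' Z' where sF: "split_wit n s F X' Z'" using bezout_idempotent_split[OF bez F FF] by blast
  obtain t Y T where sE': "split_wit n t (1\<^sub>m n - E) Y T"
    using bezout_idempotent_split[OF bez E' idempotent_mat_compl(1)[OF E EE]] by blast
  obtain t' Y' T' where sF': "split_wit n t' (1\<^sub>m n - F) Y' T'"
    using bezout_idempotent_split[OF bez F' idempotent_mat_compl(1)[OF F FF]] by blast
  have "t = t'"
    using split_wit_rank_eq[OF equiv sE sF] split_wit_compl_rank[OF E sE sE']
      split_wit_compl_rank[OF F sF sF'] by simp
  then show ?thesis using split_wit_idem_equiv[OF sE'] sF' by blast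
qed

lemma idem_equiv_wit_compl_inverse:
  fixes E F :: "'a::comm_ring_1 mat"
  assumes equiv: "idem_equiv_wit n E F U V"
    and equiv': "idem_equiv_wit n (1\<^sub>m n - E) (1\<^sub>m n - F) W W'"
  shows "(U + W) * (V + W') = 1\<^sub>m n" "(V + W') * (U + W) = 1\<^sub>m n"
proof -
  have E: "E \<in> carrier_mat n n" and F: "F \<in> carrier_mat n n" and U: "U \<in> carrier_mat n n"
    and V: "V \<in> carrier_mat n n" and W: "W \<in> carrier_mat n n" and W': "W' \<in> carrier_mat n n"
    and UV: "U * V = E" and VU: "V * U = F" and UF: "U * F = U" and VE: "V * E = V"
    and WW': "W * W' = 1\<^sub>m n - E" and W'W: "W' * W = 1\<^sub>m n - F"
    and WF: "W * (1\<^sub>m n - F) = W" and W'E: "W' * (1\<^sub>m n - E) = W'"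
    using equiv equiv' unfolding idem_equiv_wit_def by auto
  have E': "1\<^sub>m n - E \<in> carrier_mat n n" and F': "1\<^sub>m n - F \<in> carrier_mat n n"
    using E F by (auto intro: minus_carrier_mat)
  note EU = idem_equiv_witD(2)[OF equiv] and FV = idem_equiv_witD(2)[OF idem_equiv_wit_sym[OF equiv]]
  note E'W = idem_equiv_witD(2)[OF equiv'] and F'W' = idem_equiv_witD(2)[OF idem_equiv_wit_sym[OF equiv']]
  note cE = idempotent_mat_compl[OF E idem_equiv_witD(1)[OF equiv]]
  note cF = idempotent_mat_compl[OF F idem_equiv_witD(1)[OF idem_equiv_wit_sym[OF equiv]]]
  have "U * W' = 0\<^sub>m n n" by (rule mult_mat_zero_through[OF U F F' W' UF cF(2) F'W'])
  moreover have "W * V = 0\<^sub>m n n" by (rule mult_mat_zero_through[OF W F' F V WF cF(3) FV])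
  moreover have "V * W = 0\<^sub>m n n" by (rule mult_mat_zero_through[OF V E E' W VE cE(2) E'W])
  moreover have "W' * U = 0\<^sub>m n n" by (rule mult_mat_zero_through[OF W' E' E U W'E cE(3) EU])
  ultimately show "(U + W) * (V + W') = 1\<^sub>m n" "(V + W') * (U + W) = 1\<^sub>m n"
    using U V W W' E F UV VU WW' W'W
    by (simp_all add: add_mult_distrib_mat[of _ n n] mult_add_distrib_mat[of _ n n _ n])
      (intro eq_matI; auto)+
qed

lemma similar_mat_wit_of_idem_equiv:
  fixes M N :: "'a::comm_ring_1 mat"
  assumes equiv: "idem_equiv_wit n E F U V"
    and equiv': "idem_equiv_wit n (1\<^sub>m n - E) (1\<^sub>m n - F) W W'"
    and M: "M \<in> carrier_mat n n" and N: "N \<in> carrier_mat n n"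
    and ME: "M * E = M" and FN: "F * N = N" and MU: "M * U = U * N"
  shows "similar_mat_wit M N (U + W) (V + W')"
proof -
  have E: "E \<in> carrier_mat n n" and F: "F \<in> carrier_mat n n" and U: "U \<in> carrier_mat n n"
    and V: "V \<in> carrier_mat n n" and W: "W \<in> carrier_mat n n" and W': "W' \<in> carrier_mat n n"
    and WF: "W * (1\<^sub>m n - F) = W"
    using equiv equiv' unfolding idem_equiv_wit_def by auto
  have E': "1\<^sub>m n - E \<in> carrier_mat n n" and F': "1\<^sub>m n - F \<in> carrier_mat n n"
    using E F by (auto intro: minus_carrier_mat)
  note inv = idem_equiv_wit_compl_inverse[OF equiv equiv']
  have "M * W = 0\<^sub>m n n"
    by (rule mult_mat_zero_through[OF M E E' W ME
          idempotent_mat_compl(2)[OF E idem_equiv_witD(1)[OF equiv]] idem_equiv_witD(2)[OF equiv']])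
  moreover have "W * N = 0\<^sub>m n n"
    by (rule mult_mat_zero_through[OF W F' F N WF
          idempotent_mat_compl(3)[OF F idem_equiv_witD(1)[OF idem_equiv_wit_sym[OF equiv]]] FN])
  ultimately have MP: "M * (U + W) = (U + W) * N"
    using M N U W MU by (simp add: mult_add_distrib_mat[of _ n n _ n] add_mult_distrib_mat[of _ n n _ _ n])
  have "M = M * ((U + W) * (V + W'))" using M inv(1) by simp
  also have "\<dots> = (U + W) * N * (V + W')" using M U W V W' by (simp add: MP flip: assoc_mult_mat_dim)
  finally show ?thesis
    unfolding similar_mat_wit_def Let_def using M N U V W W' inv by auto
qed

definition group_inverse :: "'a::semiring_0 mat \<Rightarrow> 'a mat \<Rightarrow> bool" where
  "group_inverse M X \<longleftrightarrow> M * X = X * M \<and> X * M * X = X \<and> M * X * M = M"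

lemma group_inverse_simps:
  fixes M X :: "'a::semiring_0 mat"
  assumes M: "M \<in> carrier_mat n n" and X: "X \<in> carrier_mat n n" and "group_inverse M X"
  shows "M * X = X * M" "X * (X * M) = X" "X * (M * M) = M"
    "dim_row T = n \<Longrightarrow> M * (X * T) = X * (M * T)"
    "dim_row T = n \<Longrightarrow> X * (X * (M * T)) = X * T"
    "dim_row T = n \<Longrightarrow> X * (M * (M * T)) = M * T"
proof -
  have comm: "M * X = X * M" and XMX: "X * M * X = X" and MXM: "M * X * M = M"
    using assms(3) unfolding group_inverse_def by auto
  show "M * X = X * M" by (fact comm)
  have "X * (X * M) = X * (M * X)" by (simp only: comm)
  also have "\<dots> = X" using XMX M X by simp
  finally show XXM: "X * (X * M) = X" .
  show XMM: "X * (M * M) = M" using MXM M X by (simp add: comm mult_mat_assoc_eq[OF comm, symmetric])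
  show "dim_row T = n \<Longrightarrow> M * (X * T) = X * (M * T)" using mult_mat_assoc_eq[OF comm] M X by simp
  show "dim_row T = n \<Longrightarrow> X * (X * (M * T)) = X * T"
    using mult_mat_assoc_eq[OF XXM] M X by simp
  show "dim_row T = n \<Longrightarrow> X * (M * (M * T)) = M * T"
    using mult_mat_assoc_eq[OF XMM] M X by simp
qed

lemma group_inverse_intertwine:
  fixes M N A :: "'a::semiring_0 mat"
  assumes M: "M \<in> carrier_mat n n" and N: "N \<in> carrier_mat n n" and A: "A \<in> carrier_mat n n"
    and Mg: "Mg \<in> carrier_mat n n" and Ng: "Ng \<in> carrier_mat n n"
    and gM: "group_inverse M Mg" and gN: "group_inverse N Ng" and MA: "M * A = A * N"
  shows "Mg * A = A * Ng"
proof -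
  note carriers = M N A Mg Ng
  note m = group_inverse_simps[OF M Mg gM] and k = group_inverse_simps[OF N Ng gN]
  have MA': "M * (A * T) = A * (N * T)" if "dim_row T = n" for T
    using mult_mat_assoc_eq[OF MA, of T] that M N A by simp
  have "Mg * A = Mg * (Mg * (M * A))" using carriers by (simp add: m)
  also have "\<dots> = Mg * (Mg * (A * (Ng * (N * N))))" using carriers MA by (simp add: k)
  also have "\<dots> = Mg * (Mg * (M * (M * (A * Ng))))" using carriers by (simp add: MA' k)
  also have "\<dots> = Mg * (M * (A * Ng))" using carriers by (simp add: m)
  finally have left: "Mg * A = Mg * (M * (A * Ng))" .
  have "A * Ng = A * (N * (Ng * Ng))" using carriers by (simp add: k)
  also have "\<dots> = M * (A * (Ng * Ng))" using carriers by (simp add: MA')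
  also have "\<dots> = Mg * (M * (M * (A * (Ng * Ng))))" using carriers by (simp add: m)
  also have "\<dots> = Mg * (M * (A * Ng))" using carriers by (simp add: MA' k)
  finally show ?thesis using left by simp
qed

lemma idem_equiv_wit_of_intertwining:
  fixes M N A Y :: "'a::semiring_1 mat"
  assumes M: "M \<in> carrier_mat n n" and N: "N \<in> carrier_mat n n"
    and A: "A \<in> carrier_mat n n" and Y: "Y \<in> carrier_mat n n"
    and Mg: "Mg \<in> carrier_mat n n" and Ng: "Ng \<in> carrier_mat n n"
    and gM: "group_inverse M Mg" and gN: "group_inverse N Ng"
    and MA: "M * A = A * N" and NY: "N * Y = Y * M" and AY: "A * Y = M * M" and YA: "Y * A = N * N"
  shows "idem_equiv_wit n (Mg * M) (Ng * N) (A * (Ng * N)) (Y * (Mg * Mg))"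
    and "M * (A * (Ng * N)) = A * (Ng * N) * N"
proof -
  have MgA: "Mg * A = A * Ng" by (rule group_inverse_intertwine[OF M N A Mg Ng gM gN MA])
  have NgY: "Ng * Y = Y * Mg" by (rule group_inverse_intertwine[OF N M Y Ng Mg gN gM NY])
  \<comment> \<open>simp brings products into right-nested form; these rules, stated for an arbitrary right
    factor, then rewrite both sides of each identity to the same word\<close>
  note rules = group_inverse_simps[OF M Mg gM] group_inverse_simps[OF N Ng gN]
    MA MgA NY NgY AY YA mult_mat_assoc_eq[OF MA] mult_mat_assoc_eq[OF MgA]
    mult_mat_assoc_eq[OF NY] mult_mat_assoc_eq[OF NgY] mult_mat_assoc_eq[OF AY] mult_mat_assoc_eq[OF YA]
  show "idem_equiv_wit n (Mg * M) (Ng * N) (A * (Ng * N)) (Y * (Mg * Mg))"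
    unfolding idem_equiv_wit_def using M N A Y Mg Ng by (simp add: rules)
  show "M * (A * (Ng * N)) = A * (Ng * N) * N" using M N A Y Mg Ng by (simp add: rules)
qed

theorem theorem2p1:
  fixes A B C :: "'a::idom mat" and n :: nat
  assumes "bezout_domain TYPE('a)"
    and "A \<in> carrier_mat n n" and "B \<in> carrier_mat n n" and "C \<in> carrier_mat n n"
    and "A * B * A = A * C * A"
    and "group_invertible n (A * B)" and "group_invertible n (C * A)"
  shows "similar_mat (A * B) (C * A)"
proof -
  note carriers = assms(2-4)
  have AB: "A * B \<in> carrier_mat n n" and CA: "C * A \<in> carrier_mat n n"
    and CAB: "C * (A * B) \<in> carrier_mat n n" using carriers by auto
  obtain Mg where Mg: "Mg \<in> carrier_mat n n" and gM: "group_inverse (A * B) Mg"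
    using assms(6) unfolding group_invertible_def group_inverse_def by blast
  obtain Ng where Ng: "Ng \<in> carrier_mat n n" and gN: "group_inverse (C * A) Ng"
    using assms(7) unfolding group_invertible_def group_inverse_def by blast
  have ABA: "A * (B * (A * T)) = A * (C * (A * T))" if "dim_row T = n" for T
    using mult_mat_assoc_eq[OF assms(5), of T] that carriers by simp
  have "A * B * A = A * (C * A)" "C * A * (C * (A * B)) = C * (A * B) * (A * B)"
    "A * (C * (A * B)) = A * B * (A * B)" "C * (A * B) * A = C * A * (C * A)"
    using carriers ABA[of B] ABA[of "1\<^sub>m n"] by simp_all
  note equiv = idem_equiv_wit_of_intertwining[OF AB CA assms(2) CAB Mg Ng gM gN this]
  obtain W W' where "idem_equiv_wit n (1\<^sub>m n - Mg * (A * B)) (1\<^sub>m n - Ng * (C * A)) W W'"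
    using bezout_idem_equiv_compl[OF assms(1) equiv(1)] by blast
  moreover have "A * B * (Mg * (A * B)) = A * B" using gM AB Mg unfolding group_inverse_def by simp
  moreover have "Ng * (C * A) * (C * A) = C * A" using group_inverse_simps(3)[OF CA Ng gN] CA Ng by simp
  ultimately have "similar_mat_wit (A * B) (C * A) (A * (Ng * (C * A)) + W) (C * (A * B) * (Mg * Mg) + W')"
    using similar_mat_wit_of_idem_equiv[OF equiv(1) _ AB CA _ _ equiv(2)] by blast
  then show ?thesis unfolding similar_mat_def by blast
qed

end
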